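(* Let $C$ be a copula and $p_0,q_0,q\in[0,1]$ with $q\neq q_0$. If $\lambda^C(q_0|p_0)$ and $\lambda^C(q|p_0)$ exist, then $$\lambda^C(q_0|p_0)+\lambda^C(q|p_0)\le 1.$$
   Context: For a copula $C$ (bivariate distribution function on $[0,1]^2$ with uniform margins) and $p,q\in[0,1]$, let $(U,V)$ have joint distribution function $C$; the $(p,q)$-quantile dependence coefficient is $\lambda^C(q|p)=\lim_{t\to0^+}P((q-t)^+<V\le(q+t)^-\mid (p-t)^+<U\le(p+t)^-)$ when the limit exists, where $a^+=\max(a,0)$ and $a^-=1-(1-a)^+$. *)

theory Defs
  imports "HOL-Analysis.Analysis"
begin

definition copula :: "(real \<Rightarrow> real \<Rightarrow> real) \<Rightarrow> bool" where
  "copula C \<longleftrightarrow>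
     (\<forall>u\<in>{0..1}. C u 0 = 0 \<and> C 0 u = 0 \<and> C u 1 = u \<and> C 1 u = u) \<and>
     (\<forall>u1\<in>{0..1}. \<forall>u2\<in>{0..1}. \<forall>v1\<in>{0..1}. \<forall>v2\<in>{0..1}.
        u1 \<le> u2 \<longrightarrow> v1 \<le> v2 \<longrightarrow> C u2 v2 - C u2 v1 - C u1 v2 + C u1 v1 \<ge> 0)"

definition pos_part :: "real \<Rightarrow> real" where
  "pos_part a = max a 0"

definition neg_part :: "real \<Rightarrow> real" where
  "neg_part a = 1 - pos_part (1 - a)"

text \<open>C-volume of the rectangle (a1,a2] x (b1,b2], i.e. P(a1<U<=a2, b1<V<=b2).\<close>
definition C_vol :: "(real \<Rightarrow> real \<Rightarrow> real) \<Rightarrow> real \<Rightarrow> real \<Rightarrow> real \<Rightarrow> real \<Rightarrow> real" where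
  "C_vol C a1 a2 b1 b2 = C a2 b2 - C a1 b2 - C a2 b1 + C a1 b1"

text \<open>The conditional probability
  P((q-t)^+ < V <= (q+t)^- | (p-t)^+ < U <= (p+t)^-), using that U is uniform.\<close>
definition qd_ratio :: "(real \<Rightarrow> real \<Rightarrow> real) \<Rightarrow> real \<Rightarrow> real \<Rightarrow> real \<Rightarrow> real" where
  "qd_ratio C p q t =
     C_vol C (pos_part (p - t)) (neg_part (p + t)) (pos_part (q - t)) (neg_part (q + t))
     / (neg_part (p + t) - pos_part (p - t))"

text \<open>\<open>has_qdc C p q L\<close>: the coefficient lambda^C(q|p) exists and equals L.\<close>
definition has_qdc :: "(real \<Rightarrow> real \<Rightarrow> real) \<Rightarrow> real \<Rightarrow> real \<Rightarrow> real \<Rightarrow> bool" where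
  "has_qdc C p q L \<longleftrightarrow> ((\<lambda>t. qd_ratio C p q t) \<longlongrightarrow> L) (at_right 0)"

end

theory Submission
  imports Defs
begin

text \<open>For small t the V-windows around q0 and q are disjoint, so the two rectangles over the
  common U-window are disjoint pieces of the vertical strip above it. That strip has C-volume
  equal to its width, because the margins are uniform; hence the two conditional
  probabilities sum to at most 1, and so do their limits.\<close>

lemma copula_C_vol_nonneg:
  assumes "copula C" "0 \<le> a1" "a1 \<le> a2" "a2 \<le> 1" "0 \<le> b1" "b1 \<le> b2" "b2 \<le> 1"
  shows "C_vol C a1 a2 b1 b2 \<ge> 0"
  using assms unfolding copula_def C_vol_def by (smt (verit) atLeastAtMost_iff)

lemma copula_C_vol_strip:
  assumes "copula C" "a1 \<in> {0..1}" "a2 \<in> {0..1}"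
  shows "C_vol C a1 a2 0 1 = a2 - a1"
  using assms unfolding copula_def C_vol_def by simp

lemma copula_C_vol_two_rectangles_le:
  assumes "copula C" "0 \<le> a1" "a1 \<le> a2" "a2 \<le> 1"
    and "0 \<le> b1" "b1 \<le> b2" "b2 \<le> c1" "c1 \<le> c2" "c2 \<le> 1"
  shows "C_vol C a1 a2 b1 b2 + C_vol C a1 a2 c1 c2 \<le> a2 - a1"
proof -
  have "C_vol C a1 a2 0 b1 \<ge> 0" "C_vol C a1 a2 b2 c1 \<ge> 0" "C_vol C a1 a2 c2 1 \<ge> 0"
    using copula_C_vol_nonneg[OF assms(1-4)] assms by auto
  moreover have "C_vol C a1 a2 0 1 = a2 - a1"
    using copula_C_vol_strip assms by simp
  ultimately show ?thesis
    unfolding C_vol_def by linarith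
qed

lemma qd_window_bounds:
  assumes "p \<in> {0..1}" "0 < t"
  shows "0 \<le> pos_part (p - t)" "pos_part (p - t) < neg_part (p + t)" "neg_part (p + t) \<le> 1"
  using assms unfolding pos_part_def neg_part_def by auto

lemma qd_windows_disjoint:
  assumes "2 * t \<le> q - q0"
  shows "neg_part (q0 + t) \<le> pos_part (q - t)"
  using assms unfolding pos_part_def neg_part_def by auto

lemma qd_ratio_add_le_1_ordered:
  assumes "copula C" "p \<in> {0..1}" "q0 \<in> {0..1}" "q \<in> {0..1}"
    and "0 < t" "2 * t \<le> q - q0"
  shows "qd_ratio C p q0 t + qd_ratio C p q t \<le> 1"
proof -
  define a1 a2 where "a1 = pos_part (p - t)" and "a2 = neg_part (p + t)"
  have a: "0 \<le> a1" "a1 < a2" "a2 \<le> 1"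
    using qd_window_bounds[OF assms(2,5)] unfolding a1_def a2_def by auto
  have "C_vol C a1 a2 (pos_part (q0 - t)) (neg_part (q0 + t))
      + C_vol C a1 a2 (pos_part (q - t)) (neg_part (q + t)) \<le> a2 - a1"
    using copula_C_vol_two_rectangles_le[OF assms(1) a(1) less_imp_le[OF a(2)] a(3)]
      qd_window_bounds[OF assms(3,5)] qd_window_bounds[OF assms(4,5)] qd_windows_disjoint[OF assms(6)]
    by simp
  with a show ?thesis
    unfolding qd_ratio_def a1_def[symmetric] a2_def[symmetric] add_divide_distrib[symmetric]
    by simp
qed

lemma qd_ratio_add_le_1:
  assumes "copula C" "p \<in> {0..1}" "q0 \<in> {0..1}" "q \<in> {0..1}"
    and "0 < t" "2 * t \<le> \<bar>q - q0\<bar>"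
  shows "qd_ratio C p q0 t + qd_ratio C p q t \<le> 1"
proof (cases "q0 \<le> q")
  case True
  then show ?thesis
    using qd_ratio_add_le_1_ordered[OF assms(1-5)] assms(6) by simp
next
  case False
  then show ?thesis
    using qd_ratio_add_le_1_ordered[OF assms(1,2,4,3,5)] assms(6) by simp
qed

theorem proposition4:
  fixes C :: "real \<Rightarrow> real \<Rightarrow> real" and p0 q0 q L0 L :: real
  assumes "copula C"
    and "p0 \<in> {0..1}" and "q0 \<in> {0..1}" and "q \<in> {0..1}" and "q \<noteq> q0"
    and "has_qdc C p0 q0 L0" and "has_qdc C p0 q L"
  shows "L0 + L \<le> 1"
proof (rule tendsto_upperbound)
  show "((\<lambda>t. qd_ratio C p0 q0 t + qd_ratio C p0 q t) \<longlongrightarrow> L0 + L) (at_right 0)"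
    using assms(6,7) unfolding has_qdc_def by (rule tendsto_add)
  have "\<bar>q - q0\<bar> / 2 > 0"
    using assms(5) by simp
  then have "\<forall>\<^sub>F t in at_right 0. t < \<bar>q - q0\<bar> / 2"
    using order_tendstoD(2)[OF tendsto_ident_at] by blast
  with eventually_at_right_less
  show "\<forall>\<^sub>F t in at_right 0. qd_ratio C p0 q0 t + qd_ratio C p0 q t \<le> 1"
    by eventually_elim (simp add: qd_ratio_add_le_1[OF assms(1-4)])
qed simp

end
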